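(* For every $n\ge 0$, if $B_n$ is the Boolean lattice of subsets of an $n$-element set, then $\mathcal{J}(B_n,t)=(t+1)^n$.
   Context: $B_n$ is ranked by cardinality with $\hat 0=\emptyset$ and $\hat 1$ the whole set, $\mathrm{rk}(B_n)=n$. Let $\delta_3(x,y,z)=1$ if $x=y=z$ and $0$ otherwise, let $J$ be the unique integer-valued function on triples $x\le y\le z$ with $\sum_{x\le a\le y\le b\le z}J(a,y,b)=\delta_3(x,y,z)$ for all $x\le y\le z$, and $\mathcal{J}(\mathcal{P},t)=(-1)^{\mathrm{rk}(\mathcal{P})}\sum_{x\in\mathcal{P}}J(\hat 0,x,\hat 1)\,t^{\mathrm{rk}(\mathcal{P})-\mathrm{rk}(x)}$. *)

theory Defs
  imports "HOL-Computational_Algebra.Polynomial"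
begin

text \<open>J_fun P le is the unique integer-valued function on triples x \<le> y \<le> z of P with
  sum over x \<le> a \<le> y \<le> b \<le> z of J(a,y,b) equal to delta_3(x,y,z);
  it is normalised to 0 outside such triples so that it is unique as a HOL function.\<close>

definition J_fun :: "'a set \<Rightarrow> ('a \<Rightarrow> 'a \<Rightarrow> bool) \<Rightarrow> ('a \<Rightarrow> 'a \<Rightarrow> 'a \<Rightarrow> int)" where
  "J_fun P le = (THE J.
     (\<forall>x y z. \<not> (x \<in> P \<and> y \<in> P \<and> z \<in> P \<and> le x y \<and> le y z) \<longrightarrow> J x y z = 0) \<and>
     (\<forall>x\<in>P. \<forall>y\<in>P. \<forall>z\<in>P. le x y \<and> le y z \<longrightarrow>
        (\<Sum>(a, b) \<in> {(a, b). a \<in> P \<and> b \<in> P \<and> le x a \<and> le a y \<and> le y b \<and> le b z}. J a y b)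
        = (if x = y \<and> y = z then 1 else 0)))"

definition calJ :: "'a set \<Rightarrow> ('a \<Rightarrow> 'a \<Rightarrow> bool) \<Rightarrow> ('a \<Rightarrow> nat) \<Rightarrow> 'a \<Rightarrow> 'a \<Rightarrow> int poly" where
  "calJ P le rk zero one =
     (-1) ^ rk one * (\<Sum>x\<in>P. monom (J_fun P le zero x one) (rk one - rk x))"

definition boolean_lattice :: "nat \<Rightarrow> nat set set" where
  "boolean_lattice n = Pow {0..<n}"

end

theory Submission
  imports Defs
begin

text \<open>On the Boolean lattice the defining equations of J are solved by
  J(x,y,z) = (-1)^(|x|+|z|): the sum over x \<subseteq> a \<subseteq> y \<subseteq> b \<subseteq> z factors into two alternating
  sums over Boolean intervals, each of which vanishes unless the interval is a single point.
  In any finite poset J is unique, by induction on the size of the interval [x,z]. Hence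
  J(\<emptyset>,x,[n]) = (-1)^n and the polynomial is the sum of t^(n-|x|) over all subsets x, i.e. (1+t)^n.\<close>

lemma sum_minus_one_power_card_between:
  assumes "finite y" "x \<subseteq> y"
  shows "(\<Sum>a | x \<subseteq> a \<and> a \<subseteq> y. (-1::'b::ring_1) ^ card a) = (if x = y then (-1) ^ card y else 0)"
proof (cases "x = y")
  case True
  then have "{a. x \<subseteq> a \<and> a \<subseteq> y} = {y}" by auto
  then show ?thesis using True by simp
next
  case False
  with assms have "x \<subset> y" by auto
  have "finite {a. x \<subseteq> a \<and> a \<subseteq> y}"
    using assms(1) by (auto intro: finite_subset[of _ "Pow y"])
  moreover have "card {a. a \<in> {a. x \<subseteq> a \<and> a \<subseteq> y} \<and> even (card a)}
      = card {a. a \<in> {a. x \<subseteq> a \<and> a \<subseteq> y} \<and> odd (card a)}"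
    using card_subsupersets_even_odd[OF assms(1) \<open>x \<subset> y\<close>] by (simp add: conj_commute conj_left_commute)
  ultimately show ?thesis
    using False by (simp add: sum_alternating_cancels)
qed

definition is_J_function :: "'a set \<Rightarrow> ('a \<Rightarrow> 'a \<Rightarrow> bool) \<Rightarrow> ('a \<Rightarrow> 'a \<Rightarrow> 'a \<Rightarrow> int) \<Rightarrow> bool" where
  "is_J_function P le J \<longleftrightarrow>
     (\<forall>x y z. \<not> (x \<in> P \<and> y \<in> P \<and> z \<in> P \<and> le x y \<and> le y z) \<longrightarrow> J x y z = 0) \<and>
     (\<forall>x\<in>P. \<forall>y\<in>P. \<forall>z\<in>P. le x y \<and> le y z \<longrightarrow>
        (\<Sum>(a, b) \<in> {(a, b). a \<in> P \<and> b \<in> P \<and> le x a \<and> le a y \<and> le y b \<and> le b z}. J a y b)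
        = (if x = y \<and> y = z then 1 else 0))"

lemma J_fun_conv_THE: "J_fun P le = (THE J. is_J_function P le J)"
  unfolding J_fun_def is_J_function_def ..

lemma card_interval_psubset:
  fixes x a b z :: "'a::order"
  assumes "finite P" "x \<in> P" "z \<in> P" "x \<le> z" "x \<le> a" "b \<le> z" "(a, b) \<noteq> (x, z)"
  shows "card {c \<in> P. a \<le> c \<and> c \<le> b} < card {c \<in> P. x \<le> c \<and> c \<le> z}"
proof (rule psubset_card_mono)
  show "finite {c \<in> P. x \<le> c \<and> c \<le> z}" using assms(1) by simp
  have "{c \<in> P. a \<le> c \<and> c \<le> b} \<subseteq> {c \<in> P. x \<le> c \<and> c \<le> z}"
    using assms(5,6) by auto
  moreover have "x \<notin> {c \<in> P. a \<le> c \<and> c \<le> b} \<or> z \<notin> {c \<in> P. a \<le> c \<and> c \<le> b}"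
    using assms(5-7) by auto
  ultimately show "{c \<in> P. a \<le> c \<and> c \<le> b} \<subset> {c \<in> P. x \<le> c \<and> c \<le> z}"
    using assms(2-4) by blast
qed

lemma is_J_function_unique:
  fixes P :: "'a::order set"
  assumes "finite P" and J: "is_J_function P (\<le>) J" and J': "is_J_function P (\<le>) J'"
  shows "J = J'"
proof (intro ext)
  fix x y z
  show "J x y z = J' x y z"
  proof (induction "card {c \<in> P. x \<le> c \<and> c \<le> z}" arbitrary: x z rule: less_induct)
    case less
    show ?case
    proof (cases "x \<in> P \<and> y \<in> P \<and> z \<in> P \<and> x \<le> y \<and> y \<le> z")
      case False
      then show ?thesis using J J' by (simp add: is_J_function_def)
    next
      case True
      define S where "S = {(a, b). a \<in> P \<and> b \<in> P \<and> x \<le> a \<and> a \<le> y \<and> y \<le> b \<and> b \<le> z}"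
      have "finite S"
        using assms(1) by (auto simp: S_def intro: finite_subset[of _ "P \<times> P"])
      moreover have "(x, z) \<in> S"
        using True by (simp add: S_def)
      moreover have "(\<Sum>(a, b) \<in> S. J a y b) = (\<Sum>(a, b) \<in> S. J' a y b)"
        using J J' True by (simp add: is_J_function_def S_def)
      moreover have "(\<Sum>(a, b) \<in> S - {(x, z)}. J a y b) = (\<Sum>(a, b) \<in> S - {(x, z)}. J' a y b)"
      proof (rule sum.cong[OF refl])
        fix p assume p: "p \<in> S - {(x, z)}"
        obtain a b where [simp]: "p = (a, b)" by fastforce
        have "card {c \<in> P. a \<le> c \<and> c \<le> b} < card {c \<in> P. x \<le> c \<and> c \<le> z}"
          using p True assms(1) by (intro card_interval_psubset) (auto simp: S_def)
        then show "(case p of (a, b) \<Rightarrow> J a y b) = (case p of (a, b) \<Rightarrow> J' a y b)"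
          using less.hyps by simp
      qed
      ultimately show ?thesis by (simp add: sum.remove)
    qed
  qed
qed

lemma J_fun_eqI:
  fixes P :: "'a::order set"
  assumes "finite P" "is_J_function P (\<le>) J"
  shows "J_fun P (\<le>) = J"
  unfolding J_fun_conv_THE using assms by (blast intro: is_J_function_unique)

definition boolean_J :: "'a set \<Rightarrow> 'a set \<Rightarrow> 'a set \<Rightarrow> 'a set \<Rightarrow> int" where
  "boolean_J A x y z = (if x \<subseteq> y \<and> y \<subseteq> z \<and> z \<subseteq> A then (-1) ^ (card x + card z) else 0)"

lemma is_J_function_boolean_J:
  assumes "finite A"
  shows "is_J_function (Pow A) (\<subseteq>) (boolean_J A)"
  unfolding is_J_function_def
proof (intro conjI allI impI ballI)
  fix x y z :: "'a set"
  assume "\<not> (x \<in> Pow A \<and> y \<in> Pow A \<and> z \<in> Pow A \<and> x \<subseteq> y \<and> y \<subseteq> z)"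
  then show "boolean_J A x y z = 0" by (auto simp: boolean_J_def)
next
  fix x y z :: "'a set"
  assume "x \<in> Pow A" "y \<in> Pow A" "z \<in> Pow A" and xyz: "x \<subseteq> y \<and> y \<subseteq> z"
  then have "finite y" "finite z" "z \<subseteq> A"
    using assms by (auto intro: finite_subset)
  then have intervals: "{(a, b). a \<in> Pow A \<and> b \<in> Pow A \<and> x \<subseteq> a \<and> a \<subseteq> y \<and> y \<subseteq> b \<and> b \<subseteq> z}
      = {a. x \<subseteq> a \<and> a \<subseteq> y} \<times> {b. y \<subseteq> b \<and> b \<subseteq> z}"
    by blast
  have "(\<Sum>(a, b) \<in> {(a, b). a \<in> Pow A \<and> b \<in> Pow A \<and> x \<subseteq> a \<and> a \<subseteq> y \<and> y \<subseteq> b \<and> b \<subseteq> z}.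
          boolean_J A a y b)
      = (\<Sum>(a, b) \<in> {a. x \<subseteq> a \<and> a \<subseteq> y} \<times> {b. y \<subseteq> b \<and> b \<subseteq> z}. (-1) ^ card a * (-1) ^ card b)"
    unfolding intervals using \<open>z \<subseteq> A\<close> by (intro sum.cong) (auto simp: boolean_J_def power_add)
  also have "\<dots> = (\<Sum>a | x \<subseteq> a \<and> a \<subseteq> y. (-1) ^ card a) * (\<Sum>b | y \<subseteq> b \<and> b \<subseteq> z. (-1) ^ card b)"
    by (simp add: sum_product sum.cartesian_product)
  also have "\<dots> = (if x = y \<and> y = z then 1 else 0)"
    using xyz by (simp add: sum_minus_one_power_card_between[OF \<open>finite y\<close>]
        sum_minus_one_power_card_between[OF \<open>finite z\<close>] flip: power_add)
  finally show "(\<Sum>(a, b) \<in> {(a, b). a \<in> Pow A \<and> b \<in> Pow A \<and> x \<subseteq> a \<and> a \<subseteq> y \<and> y \<subseteq> b \<and> b \<subseteq> z}.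
          boolean_J A a y b) = (if x = y \<and> y = z then 1 else 0)" .
qed

lemma J_fun_Pow: "finite A \<Longrightarrow> J_fun (Pow A) (\<subseteq>) = boolean_J A"
  by (rule J_fun_eqI) (simp_all add: is_J_function_boolean_J)

lemma minus_one_power_mult_monom: "(-1) ^ n * monom ((-1::'a::comm_ring_1) ^ n) k = [:0, 1:] ^ k"
  by (cases "even n") (auto simp: monom_altdef minus_monom)

lemma calJ_Pow:
  assumes "finite A"
  shows "calJ (Pow A) (\<subseteq>) card {} A = [:1, 1:] ^ card A"
proof -
  have "calJ (Pow A) (\<subseteq>) card {} A = (\<Sum>x\<in>Pow A. (-1) ^ card A * monom ((-1) ^ card A) (card (A - x)))"
    using assms by (auto simp: calJ_def J_fun_Pow boolean_J_def sum_distrib_left card_Diff_subset finite_subset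
        intro!: sum.cong)
  also have "\<dots> = (\<Sum>X\<in>Pow A. (\<Prod>_\<in>X. 1) * (\<Prod>_\<in>A - X. [:0, 1:]))"
    by (simp add: minus_one_power_mult_monom)
  also have "\<dots> = (\<Prod>_\<in>A. 1 + [:0, 1:])"
    using assms by (rule prod_add[symmetric])
  also have "\<dots> = [:1, 1:] ^ card A"
    by (simp add: one_pCons)
  finally show ?thesis .
qed

theorem proposition6p7:
  fixes n :: nat
  shows "calJ (boolean_lattice n) (\<subseteq>) card {} {0..<n} = [:1, 1:] ^ n"
  using calJ_Pow[of "{0..<n}"] by (simp add: boolean_lattice_def)

end
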